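(* Let $\big((\mathbf{v},\psi,p),(\mathbf{v}',\psi',p')\big)$ be an autonomous MCNF–CCNF pair (as defined in the context). Then for all $\mathbf{x}\in\mathcal{X}$ and $t\ge0$, $$\frac{\mathrm{d}\psi(\mathbf{x},t)}{\mathrm{d}t}\in\mathrm{co}\left\{\mathbf{v}'(\psi(\mathbf{x},t)\mid\mathbf{x}')\ \middle|\ \mathbf{x}'\in\mathcal{X}'\right\},$$ where $\mathrm{co}$ denotes the convex hull.
   Context: Let $\mathcal{X}\subseteq\mathbb{R}^n$ be the state space. A continuous normalizing flow (CNF) on $\mathcal{X}$ is a triple $(\mathbf{v},\psi,p)$ of a continuously differentiable vector field $\mathbf{v}(\mathbf{x},t)$, a flow map $\psi(\mathbf{x},t)$ and time-dependent probability densities $p(\mathbf{x},t)$, $t\ge0$, with $\frac{\mathrm{d}}{\mathrm{d}t}\psi(\mathbf{x},t)=\mathbf{v}(\psi(\mathbf{x},t),t)$ and $\partial_tp=-\nabla_{\mathbf{x}}\cdot(\mathbf{v}p)$. A target density $q'$ lives on a target set $\mathcal{X}'\subset\mathcal{X}$. A conditional CNF (CCNF) is a family of CNFs $(\mathbf{v}'(\cdot\mid\mathbf{x}'),\psi'(\cdot\mid\mathbf{x}'),p'(\cdot\mid\mathbf{x}'))$, $\mathbf{x}'\in\mathcal{X}'$, with $p'(\cdot,T\mid\mathbf{x}')\approx\delta_{\mathbf{x}'}$ for some $T$. An MCNF for it is a CNF $(\mathbf{v},\psi,p)$ with $p(\mathbf{x},t)=\int_{\mathcal{X}'}p'(\mathbf{x},t\mid\mathbf{x}')q'(\mathbf{x}')\mathrm{d}\mathbf{x}'$;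 for such pairs the MCNF vector field is $\mathbf{v}(\mathbf{x},t)=\int_{\mathcal{X}'}\frac{\mathbf{v}'(\mathbf{x},t\mid\mathbf{x}')p'(\mathbf{x},t\mid\mathbf{x}')q'(\mathbf{x}')}{p(\mathbf{x},t)}\mathrm{d}\mathbf{x}'$. An MCNF–CCNF pair is autonomous if $\mathcal{X}=\mathcal{Z}\times\mathcal{T}$, $\mathcal{T}\subset\mathbb{R}$, $\mathbf{x}=(\mathbf{z},\tau)$, $\mathbf{x}'=(\mathbf{z}',\tau')$, $q'=q'_{\mathbf{z}}(\mathbf{z})q'_\tau(\tau)$, the CCNF vector field is time-independent, $\mathbf{v}'(\mathbf{x}\mid\mathbf{x}')=(\mathbf{v}'_{\mathbf{z}}(\mathbf{z}\mid\mathbf{z}'),v'_\tau(\tau\mid\tau'))$, flow map and density split accordingly ($\psi'=(\psi'_{\mathbf{z}},\psi'_\tau)$, $p'=p'_{\mathbf{z}}p'_\tau$), and for some $\tau_0\ne\tau_1$: $q'_\tau=\delta_{\tau_1}$ and $p'_\tau(\tau,t\mid\tau')=\delta_{\psi'_\tau(\tau_0,t\mid\tau')}(\tau)$. *)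

theory Defs
  imports "HOL-Analysis.Analysis"
begin

definition C1_on :: "('a::real_normed_vector \<Rightarrow> 'b::real_normed_vector) \<Rightarrow> 'a set \<Rightarrow> bool" where
  "C1_on f S \<longleftrightarrow> (\<exists>f'. (\<forall>y\<in>S. (f has_derivative blinfun_apply (f' y)) (at y within S))
                     \<and> continuous_on S f')"

definition is_density :: "('a::euclidean_space \<Rightarrow> real) \<Rightarrow> 'a set \<Rightarrow> bool" where
  "is_density q S \<longleftrightarrow> S \<in> sets lborel \<and> (\<forall>x\<in>S. 0 \<le> q x) \<and> set_integrable lborel S q
     \<and> (LINT x:S|lborel. q x) = 1"

definition is_flow :: "'a set \<Rightarrow> ('a::real_normed_vector \<Rightarrow> real \<Rightarrow> 'a) \<Rightarrow> ('a \<Rightarrow> real \<Rightarrow> 'a) \<Rightarrow> bool" where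
  "is_flow X v \<psi> \<longleftrightarrow> (\<forall>x\<in>X. \<psi> x 0 = x \<and>
     (\<forall>t\<ge>0. \<psi> x t \<in> X \<and> ((\<lambda>s. \<psi> x s) has_vector_derivative v (\<psi> x t) t) (at t within {0..})))"

text \<open>Trace of a linear map (divergence = trace of the Jacobian).\<close>
definition lin_trace :: "('a::euclidean_space \<Rightarrow> 'a) \<Rightarrow> real" where
  "lin_trace D = (\<Sum>b\<in>Basis. D b \<bullet> b)"

text \<open>Continuous normalizing flow (v, psi, p) on X: C1 vector field, flow map,
  densities satisfying the continuity equation dp/dt = - div (v p).\<close>
definition CNF :: "'a::euclidean_space set \<Rightarrow> ('a \<Rightarrow> real \<Rightarrow> 'a) \<Rightarrow> ('a \<Rightarrow> real \<Rightarrow> 'a)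
                    \<Rightarrow> ('a \<Rightarrow> real \<Rightarrow> real) \<Rightarrow> bool" where
  "CNF X v \<psi> p \<longleftrightarrow> C1_on (\<lambda>(x, t). v x t) (X \<times> {0..}) \<and> is_flow X v \<psi>
     \<and> (\<forall>t\<ge>0. is_density (\<lambda>x. p x t) X)
     \<and> (\<forall>x\<in>X. \<forall>t\<ge>0. \<exists>D. ((\<lambda>y. p y t *\<^sub>R v y t) has_derivative D) (at x)
            \<and> ((\<lambda>s. p x s) has_real_derivative - lin_trace D) (at t within {0..}))"

definition mix_density :: "'z::euclidean_space set \<Rightarrow> ('z \<Rightarrow> real \<Rightarrow> 'z \<Rightarrow> real)
                            \<Rightarrow> ('z \<Rightarrow> real) \<Rightarrow> 'z \<Rightarrow> real \<Rightarrow> real" where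
  "mix_density Z' pz' qz z t = (LINT z':Z'|lborel. pz' z t z' * qz z')"

definition mcnf_field :: "'z::euclidean_space set \<Rightarrow> ('z \<Rightarrow> 'z \<Rightarrow> 'z) \<Rightarrow> ('z \<Rightarrow> real \<Rightarrow> 'z \<Rightarrow> real)
                            \<Rightarrow> ('z \<Rightarrow> real) \<Rightarrow> 'z \<Rightarrow> real \<Rightarrow> 'z" where
  "mcnf_field Z' vz' pz' qz z t =
     (LINT z':Z'|lborel. ((pz' z t z' * qz z') / mix_density Z' pz' qz z t) *\<^sub>R vz' z z')"

end

theory Submission
  imports Defs "HOL-Probability.Probability"
begin

text \<open>The MCNF velocity at a state is the average of the conditional velocities
  \<open>v'\<^sub>z(z | z')\<close> with respect to the probability weights
  \<open>p'\<^sub>z(z,t | z') q'\<^sub>z(z') / p\<^sub>z(z,t)\<close>, while its \<open>\<tau>\<close>-component is the single conditional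
  velocity \<open>v'\<^sub>\<tau>(\<tau> | \<tau>\<^sub>1)\<close> because \<open>q'\<^sub>\<tau> = \<delta>\<^sub>\<tau>\<^sub>1\<close>. The expectation of a random vector
  lies in the convex hull of any set containing almost all of its outcomes: if the expectation
  lay outside the relative interior, a supporting hyperplane through it would force almost all
  outcomes into a face of smaller affine dimension, and one inducts on that dimension.\<close>

lemma (in prob_space) inner_integral_lower_bound:
  fixes f :: "'a \<Rightarrow> 'b::euclidean_space"
  assumes f: "integrable M f" and bound: "AE x in M. b \<le> a \<bullet> f x"
  shows "b \<le> a \<bullet> expectation f"
proof -
  have "(\<integral>x. b \<partial>M) \<le> (\<integral>x. a \<bullet> f x \<partial>M)"
    using f bound by (intro integral_mono_AE) auto
  then show ?thesis
    using f by (simp add: prob_space)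
qed

lemma (in prob_space) AE_inner_eq_integral:
  fixes f :: "'a \<Rightarrow> 'b::euclidean_space"
  assumes f: "integrable M f" and bound: "AE x in M. a \<bullet> expectation f \<le> a \<bullet> f x"
  shows "AE x in M. a \<bullet> f x = a \<bullet> expectation f"
proof -
  have nonneg: "AE x in M. 0 \<le> a \<bullet> f x - a \<bullet> expectation f"
    using bound by eventually_elim simp
  have "(\<integral>x. a \<bullet> f x - a \<bullet> expectation f \<partial>M) = 0"
    using f by (simp add: prob_space)
  then have "AE x in M. a \<bullet> f x - a \<bullet> expectation f = 0"
    using integral_nonneg_eq_0_iff_AE[OF _ nonneg] f by auto
  then show ?thesis
    by eventually_elim simp
qed

lemma (in prob_space) integral_in_closure_convex_hull:
  fixes f :: "'a \<Rightarrow> 'b::euclidean_space"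
  assumes f: "integrable M f" and f_in_S: "AE x in M. f x \<in> S"
  shows "expectation f \<in> closure (convex hull S)"
proof (rule ccontr)
  assume "expectation f \<notin> closure (convex hull S)"
  then obtain a b where a: "a \<bullet> expectation f < b" "\<forall>y\<in>closure (convex hull S). b < a \<bullet> y"
    by (metis separating_hyperplane_closed_point convex_closure convex_convex_hull closed_closure)
  have "AE x in M. b \<le> a \<bullet> f x"
    using f_in_S by eventually_elim
      (use a(2) hull_subset[of S convex] closure_subset in \<open>fastforce intro: less_imp_le\<close>)
  with a(1) show False
    using inner_integral_lower_bound[OF f] by fastforce
qed

lemma (in prob_space) AE_in_lower_dim_subset:
  fixes f :: "'a \<Rightarrow> 'b::euclidean_space"
  assumes f: "integrable M f" and f_in_S: "AE x in M. f x \<in> S"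
    and boundary: "expectation f \<notin> rel_interior (convex hull S)"
  obtains S' where "S' \<subseteq> S" "aff_dim S' < aff_dim S" "AE x in M. f x \<in> S'"
proof -
  let ?m = "expectation f" and ?C = "convex hull S"
  have "S \<noteq> {}"
    using f_in_S AE_False by force
  then obtain r where r: "r \<in> rel_interior ?C"
    using rel_interior_eq_empty[of ?C] by auto
  obtain a where a: "\<And>y. y \<in> closure ?C \<Longrightarrow> a \<bullet> ?m \<le> a \<bullet> y"
    "\<And>y. y \<in> rel_interior ?C \<Longrightarrow> a \<bullet> ?m < a \<bullet> y"
    using supporting_hyperplane_relative_frontier[OF convex_convex_hull
        integral_in_closure_convex_hull[OF f f_in_S] boundary] by blast
  define S' where "S' = S \<inter> {y. a \<bullet> y = a \<bullet> ?m}"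
  have "AE x in M. a \<bullet> ?m \<le> a \<bullet> f x"
    using f_in_S by eventually_elim (use a(1) hull_subset[of S convex] closure_subset in blast)
  then have "AE x in M. a \<bullet> f x = a \<bullet> ?m"
    by (rule AE_inner_eq_integral[OF f])
  then have "AE x in M. f x \<in> S'"
    using f_in_S unfolding S'_def by eventually_elim auto
  moreover have "aff_dim S' < aff_dim S"
  proof (rule aff_dim_psubset)
    have "affine hull S' \<subseteq> {y. a \<bullet> y = a \<bullet> ?m}"
      by (intro hull_minimal) (auto simp: S'_def affine_hyperplane)
    moreover have "r \<in> affine hull S"
      using r rel_interior_subset convex_hull_subset_affine_hull by blast
    moreover have "affine hull S' \<subseteq> affine hull S"
      by (intro hull_mono) (auto simp: S'_def)
    ultimately show "affine hull S' \<subset> affine hull S"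
      using a(2)[OF r] by auto
  qed
  ultimately show ?thesis
    using that S'_def by blast
qed

lemma (in prob_space) integral_in_convex_hull:
  fixes f :: "'a \<Rightarrow> 'b::euclidean_space"
  assumes f: "integrable M f" and f_in_S: "AE x in M. f x \<in> S"
  shows "expectation f \<in> convex hull S"
  using f_in_S
proof (induction "nat (aff_dim S + 1)" arbitrary: S rule: less_induct)
  case less
  show ?case
  proof (cases "expectation f \<in> rel_interior (convex hull S)")
    case True
    then show ?thesis
      using rel_interior_subset by blast
  next
    case False
    then obtain S' where S': "S' \<subseteq> S" "aff_dim S' < aff_dim S" "AE x in M. f x \<in> S'"
      using AE_in_lower_dim_subset[OF f less.prems] by blast
    have "nat (aff_dim S' + 1) < nat (aff_dim S + 1)"
      using S'(2) aff_dim_geq[of S'] by linarith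
    then have "expectation f \<in> convex hull S'"
      using less.hyps S'(3) by blast
    then show ?thesis
      using hull_mono[OF S'(1)] by blast
  qed
qed

lemma set_integral_weighted_in_convex_hull:
  fixes w :: "'a \<Rightarrow> real" and v :: "'a \<Rightarrow> 'b::euclidean_space"
  assumes w_nonneg: "\<And>x. x \<in> A \<Longrightarrow> 0 \<le> w x"
    and w_int: "set_integrable M A w" and w_total: "(LINT x:A|M. w x) = 1"
    and wv_int: "set_integrable M A (\<lambda>x. w x *\<^sub>R v x)"
  shows "(LINT x:A|M. w x *\<^sub>R v x) \<in> convex hull (v ` A)"
proof -
  define W where "W = (\<lambda>x. indicator A x * w x)"
  define h where "h = (\<lambda>x. indicator A x *\<^sub>R (w x *\<^sub>R v x))"
  define F where "F = (\<lambda>x. inverse (W x) *\<^sub>R h x)"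
  define N where "N = density M W"
  have W_int: "integrable M W"
    using w_int by (simp add: set_integrable_def W_def)
  have h_int: "integrable M h"
    using wv_int by (simp add: set_integrable_def h_def)
  have [measurable]: "W \<in> borel_measurable M" "h \<in> borel_measurable M"
    using W_int h_int by auto
  have [measurable]: "F \<in> borel_measurable M"
    unfolding F_def by measurable
  have W_nonneg: "0 \<le> W x" for x
    using w_nonneg by (simp add: W_def indicator_def)
  have WF_eq: "W x *\<^sub>R F x = h x" for x
    by (cases "W x = 0") (auto simp: F_def h_def W_def indicator_def)
  have "integral\<^sup>L M W = 1"
    using w_total by (simp add: set_lebesgue_integral_def W_def)
  then have "emeasure N (space N) = 1"
    by (simp add: N_def emeasure_density nn_integral_eq_integral[OF W_int] W_nonneg)
  then interpret N: prob_space N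
    by (rule prob_spaceI)
  have "integrable N F"
    unfolding N_def by (subst integrable_density) (auto simp: W_nonneg WF_eq h_int)
  moreover have "F x \<in> v ` A" if "0 < W x" for x
    using that by (auto simp: F_def h_def W_def indicator_def split: if_splits)
  then have "AE x in N. F x \<in> v ` A"
    unfolding N_def by (subst AE_density) (auto intro!: AE_I2)
  ultimately have "N.expectation F \<in> convex hull (v ` A)"
    by (rule N.integral_in_convex_hull)
  moreover have "N.expectation F = integral\<^sup>L M h"
    unfolding N_def by (subst integral_density) (auto simp: W_nonneg WF_eq)
  then have "N.expectation F = (LINT x:A|M. w x *\<^sub>R v x)"
    by (simp add: h_def set_lebesgue_integral_def)
  ultimately show ?thesis
    by simp
qed

lemma mcnf_field_in_convex_hull:
  fixes vz' :: "'z \<Rightarrow> 'z \<Rightarrow> 'z::euclidean_space"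
  assumes p_nonneg: "\<And>z'. z' \<in> Z' \<Longrightarrow> 0 \<le> pz' z t z'"
    and q_nonneg: "\<And>z'. z' \<in> Z' \<Longrightarrow> 0 \<le> qz z'"
    and p_int: "set_integrable lborel Z' (\<lambda>z'. pz' z t z' * qz z')"
    and p_pos: "mix_density Z' pz' qz z t > 0"
    and v_int: "set_integrable lborel Z'
        (\<lambda>z'. ((pz' z t z' * qz z') / mix_density Z' pz' qz z t) *\<^sub>R vz' z z')"
  shows "mcnf_field Z' vz' pz' qz z t \<in> convex hull (vz' z ` Z')"
  unfolding mcnf_field_def
proof (rule set_integral_weighted_in_convex_hull[OF _ _ _ v_int])
  let ?c = "mix_density Z' pz' qz z t"
  show "0 \<le> pz' z t z' * qz z' / ?c" if "z' \<in> Z'" for z'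
    using p_nonneg[OF that] q_nonneg[OF that] p_pos by simp
  show "set_integrable lborel Z' (\<lambda>z'. pz' z t z' * qz z' / ?c)"
    using set_integrable_divide[OF p_int] by simp
  show "(LINT z':Z'|lborel. pz' z t z' * qz z' / ?c) = 1"
    using p_pos by (simp add: set_integral_divide_zero mix_density_def)
qed

lemma is_flow_vector_derivative:
  assumes "is_flow X v \<psi>" "x \<in> X" "t \<ge> 0"
  shows "vector_derivative (\<lambda>s. \<psi> x s) (at t within {0..}) = v (\<psi> x t) t"
proof (rule vector_derivative_within)
  have "t islimpt {t..t + 1}"
    by (simp add: islimpt_Icc)
  then show "at t within {0..} \<noteq> bot"
    using assms(3) islimpt_subset[of t "{t..t + 1}" "{0..}"] by (auto simp: trivial_limit_within)
  show "((\<lambda>s. \<psi> x s) has_vector_derivative v (\<psi> x t) t) (at t within {0..})"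
    using assms unfolding is_flow_def by blast
qed

theorem corollary4p14:
  fixes Z Z' :: "'z::euclidean_space set" and T T' :: "real set"
    and vz' :: "'z \<Rightarrow> 'z \<Rightarrow> 'z" and \<psi>z' :: "'z \<Rightarrow> real \<Rightarrow> 'z \<Rightarrow> 'z"
    and pz' :: "'z \<Rightarrow> real \<Rightarrow> 'z \<Rightarrow> real" and qz :: "'z \<Rightarrow> real"
    and vt' :: "real \<Rightarrow> real \<Rightarrow> real" and \<psi>t' :: "real \<Rightarrow> real \<Rightarrow> real \<Rightarrow> real"
    and \<tau>0 \<tau>1 :: real
    and \<psi> :: "'z \<times> real \<Rightarrow> real \<Rightarrow> 'z \<times> real"
  assumes ZZ': "Z' \<subseteq> Z" and TT': "T' \<subseteq> T"
    and tau0: "\<tau>0 \<in> T" and tau1: "\<tau>1 \<in> T'" and tau01: "\<tau>0 \<noteq> \<tau>1"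
    and CCNF_z: "\<And>z'. z' \<in> Z' \<Longrightarrow>
        CNF Z (\<lambda>z t. vz' z z') (\<lambda>z t. \<psi>z' z t z') (\<lambda>z t. pz' z t z')"
    and CCNF_tau_C1: "\<And>\<tau>'. \<tau>' \<in> T' \<Longrightarrow> C1_on (\<lambda>(\<tau>, t::real). vt' \<tau> \<tau>') (T \<times> {0..})"
    and CCNF_tau_flow: "\<And>\<tau>'. \<tau>' \<in> T' \<Longrightarrow> is_flow T (\<lambda>\<tau> t. vt' \<tau> \<tau>') (\<lambda>\<tau> t. \<psi>t' \<tau> t \<tau>')"
    and q_dens: "is_density qz Z'"
    and p_int: "\<And>z t. z \<in> Z \<Longrightarrow> t \<ge> 0 \<Longrightarrow> set_integrable lborel Z' (\<lambda>z'. pz' z t z' * qz z')"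
    and p_pos: "\<And>z t. z \<in> Z \<Longrightarrow> t \<ge> 0 \<Longrightarrow> mix_density Z' pz' qz z t > 0"
    and v_int: "\<And>z t. z \<in> Z \<Longrightarrow> t \<ge> 0 \<Longrightarrow> set_integrable lborel Z'
        (\<lambda>z'. ((pz' z t z' * qz z') / mix_density Z' pz' qz z t) *\<^sub>R vz' z z')"
    and MCNF_C1: "C1_on (\<lambda>(x, t). (mcnf_field Z' vz' pz' qz (fst x) t, vt' (snd x) \<tau>1)) ((Z \<times> T) \<times> {0..})"
    and MCNF_flow: "is_flow (Z \<times> T)
        (\<lambda>x t. (mcnf_field Z' vz' pz' qz (fst x) t, vt' (snd x) \<tau>1)) \<psi>"
  shows "\<forall>x\<in>Z \<times> T. \<forall>t\<ge>0.
     vector_derivative (\<lambda>s. \<psi> x s) (at t within {0..}) \<in>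
       convex hull {(vz' (fst (\<psi> x t)) z', vt' (snd (\<psi> x t)) \<tau>') | z' \<tau>'. z' \<in> Z' \<and> \<tau>' \<in> T'}"
proof (intro ballI allI impI)
  fix x and t :: real
  assume x: "x \<in> Z \<times> T" and t: "t \<ge> 0"
  obtain z \<tau> where z\<tau>: "\<psi> x t = (z, \<tau>)" and z: "z \<in> Z"
    using MCNF_flow x t unfolding is_flow_def by (metis mem_Times_iff prod.collapse)
  have derivative: "vector_derivative (\<lambda>s. \<psi> x s) (at t within {0..})
      = (mcnf_field Z' vz' pz' qz z t, vt' \<tau> \<tau>1)"
    using is_flow_vector_derivative[OF MCNF_flow x t] z\<tau> by simp
  have "mcnf_field Z' vz' pz' qz z t \<in> convex hull (vz' z ` Z')"
    using CCNF_z z t q_dens p_int[OF z t] p_pos[OF z t] v_int[OF z t]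
    by (intro mcnf_field_in_convex_hull) (auto simp: CNF_def is_density_def)
  then have "(mcnf_field Z' vz' pz' qz z t, vt' \<tau> \<tau>1) \<in> convex hull (vz' z ` Z' \<times> {vt' \<tau> \<tau>1})"
    by (simp add: convex_hull_Times)
  moreover have "vz' z ` Z' \<times> {vt' \<tau> \<tau>1} \<subseteq> {(vz' z z', vt' \<tau> \<tau>') | z' \<tau>'. z' \<in> Z' \<and> \<tau>' \<in> T'}"
    using tau1 by blast
  ultimately show "vector_derivative (\<lambda>s. \<psi> x s) (at t within {0..}) \<in>
      convex hull {(vz' (fst (\<psi> x t)) z', vt' (snd (\<psi> x t)) \<tau>') | z' \<tau>'. z' \<in> Z' \<and> \<tau>' \<in> T'}"
    using derivative z\<tau> hull_mono by fastforce
qed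

end
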